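(* With the notation of the context below, the following hold: (1) As a polynomial in $\alpha$ and $\beta$, the polynomial $d_2(r)$ cannot be divided by $\beta-\alpha$. (2) The polynomial $c_2(r)$ does not have roots $r = \pm 2$. (3) The polynomial $c_2(r)$ is separable.
   Context: Let $K$ be a field of characteristic $p \geq 5$ with $p \equiv 5 \pmod{6}$. Consider the quartic $F := x^3z + y^4 + ry^2z^2 + z^4$. Let $c_2(r)$ denote the coefficient of $x^{2p-1}y^{p-1}z^{p-2}$ in $F^{p-1}$, regarded as a polynomial in $r$. Let $d_2(r)$ denote the coefficient of $y^{p-1}$ in $(y^4+ry^2+1)^{(p-2)/3}$; one has $d_2(r) = \binom{p-1}{(p-2)/3} c_2(r)$. Write $y^4 + ry^2 + 1 = (y^2+\alpha)(y^2+\beta)$, i.e. $\alpha+\beta = r$ and $\alpha\beta = 1$, so that $d_2(r)$ becomes the symmetric polynomial $d_2(r) = \sum_{i+j=(p-5)/6}\binom{(p-2)/3}{i}\binom{(p-2)/3}{j}\alpha^i\beta^j$ in $\alpha$ and $\beta$; in particular $r^2-4 = (\beta-\alpha)^2$. *)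

theory Defs
  imports "HOL-Library.Poly_Mapping" "HOL-Computational_Algebra.Polynomial"
begin

text \<open>Variables for the quartic: x = var 0, y = var 1, z = var 2.
  Variables for the bivariate form of d_2: alpha = var 0, beta = var 1.\<close>

definition mon3 :: "nat \<Rightarrow> nat \<Rightarrow> nat \<Rightarrow> (nat \<Rightarrow>\<^sub>0 nat)" where
  "mon3 a b c = Poly_Mapping.single 0 a + Poly_Mapping.single 1 b + Poly_Mapping.single 2 c"

definition quarticF :: "((nat \<Rightarrow>\<^sub>0 nat) \<Rightarrow>\<^sub>0 'a::field poly)" where
  "quarticF = Poly_Mapping.single (mon3 3 0 1) 1 + Poly_Mapping.single (mon3 0 4 0) 1
            + Poly_Mapping.single (mon3 0 2 2) [:0, 1:] + Poly_Mapping.single (mon3 0 0 4) 1"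

definition c2 :: "nat \<Rightarrow> 'a::field poly" where
  "c2 p = Poly_Mapping.lookup (quarticF ^ (p - 1)) (mon3 (2*p - 1) (p - 1) (p - 2))"

definition d2ab :: "nat \<Rightarrow> ((nat \<Rightarrow>\<^sub>0 nat) \<Rightarrow>\<^sub>0 'a::field)" where
  "d2ab p = (\<Sum>i\<le>(p - 5) div 6.
      Poly_Mapping.single (Poly_Mapping.single 0 i + Poly_Mapping.single 1 ((p - 5) div 6 - i))
        (of_nat (((p - 2) div 3) choose i) * of_nat (((p - 2) div 3) choose ((p - 5) div 6 - i))))"

definition var_alpha :: "((nat \<Rightarrow>\<^sub>0 nat) \<Rightarrow>\<^sub>0 'a::field)" where
  "var_alpha = Poly_Mapping.single (Poly_Mapping.single 0 1) 1"

definition var_beta :: "((nat \<Rightarrow>\<^sub>0 nat) \<Rightarrow>\<^sub>0 'a::field)" where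
  "var_beta = Poly_Mapping.single (Poly_Mapping.single 1 1) 1"

definition separable :: "'a::field poly \<Rightarrow> bool" where
  "separable f \<longleftrightarrow> coprime f (pderiv f)"

end

(*
  Evaluating at alpha = beta = 1 kills beta - alpha but sends d_2 to the Vandermonde sum
  binom(4m+2, m), which is nonzero in characteristic p = 6m + 5.

  Expanding F^(p-1) shows that the coefficient of r^k in c_2 is a multinomial coefficient,
  and these satisfy a two-term recurrence saying exactly that c_2 solves
  (r^2 - 4) f'' - (4m+1) r f' + m(3m+2) f = 0.  Differentiating k times preserves the shape
  of this equation, with middle coefficient 2k - (4m+1), a unit for k < m.  So a root of c_2
  at r = +-2 would be a root of every derivative up to order m, and a common factor of c_2
  and c_2' (which cannot vanish at +-2) would divide every derivative.  Both are impossible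
  because the m-th derivative is the nonzero constant m! * lead_coeff c_2.
*)

theory Submission
  imports Defs
begin

definition sum_coeffs :: "('k \<Rightarrow>\<^sub>0 'b::comm_semiring_1) \<Rightarrow> 'b" where
  "sum_coeffs P = Sum_any (Poly_Mapping.lookup P)"

lemma sum_coeffs_0 [simp]: "sum_coeffs 0 = 0"
  unfolding sum_coeffs_def by simp

lemma sum_coeffs_single [simp]: "sum_coeffs (Poly_Mapping.single k c) = c"
  unfolding sum_coeffs_def lookup_single by simp

lemma sum_coeffs_add: "sum_coeffs (P + Q) = sum_coeffs P + sum_coeffs Q"
  unfolding sum_coeffs_def lookup_add by (rule Sum_any.distrib) simp_all

lemma sum_coeffs_diff:
  fixes P Q :: "'k \<Rightarrow>\<^sub>0 'b::comm_ring_1"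
  shows "sum_coeffs (P - Q) = sum_coeffs P - sum_coeffs Q"
  using sum_coeffs_add[of "P - Q" Q] by (simp add: algebra_simps)

lemma sum_coeffs_sum: "sum_coeffs (\<Sum>i\<in>A. P i) = (\<Sum>i\<in>A. sum_coeffs (P i))"
  by (induction A rule: infinite_finite_induct) (simp_all add: sum_coeffs_add)

lemma sum_coeffs_mult:
  fixes P Q :: "'k::comm_monoid_add \<Rightarrow>\<^sub>0 'b::comm_semiring_1"
  shows "sum_coeffs (P * Q) = sum_coeffs P * sum_coeffs Q"
proof -
  define S where "S k l = Sum_any (\<lambda>q. Poly_Mapping.lookup Q q when k = l + q)" for k l
  have S_support: "{k. S k l \<noteq> 0} \<subseteq> (\<lambda>q. l + q) ` Poly_Mapping.keys Q" for l
    unfolding S_def by (auto elim!: Sum_any.not_neutral_obtains_not_neutral simp: in_keys_iff)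
  have S_sum: "Sum_any (\<lambda>k. S k l) = sum_coeffs Q" for l
    unfolding S_def sum_coeffs_def
    by (subst Sum_any.swap[where C = "((\<lambda>q. l + q) ` Poly_Mapping.keys Q) \<times> Poly_Mapping.keys Q"])
       (auto simp: in_keys_iff)
  have "sum_coeffs (P * Q) = Sum_any (\<lambda>k. Sum_any (\<lambda>l. Poly_Mapping.lookup P l * S k l))"
    unfolding sum_coeffs_def lookup_mult S_def ..
  also have "\<dots> = Sum_any (\<lambda>l. Sum_any (\<lambda>k. Poly_Mapping.lookup P l * S k l))"
  proof (rule Sum_any.swap)
    show "{k. \<exists>l. Poly_Mapping.lookup P l * S k l \<noteq> 0} \<times> {l. \<exists>k. Poly_Mapping.lookup P l * S k l \<noteq> 0}
      \<subseteq> (\<Union>l\<in>Poly_Mapping.keys P. (\<lambda>q. l + q) ` Poly_Mapping.keys Q) \<times> Poly_Mapping.keys P"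
    proof safe
      fix k l assume "Poly_Mapping.lookup P l * S k l \<noteq> 0"
      then have "l \<in> Poly_Mapping.keys P" "k \<in> (\<lambda>q. l + q) ` Poly_Mapping.keys Q"
        using S_support[of l] by (auto simp: in_keys_iff)
      then show "k \<in> (\<Union>l\<in>Poly_Mapping.keys P. (\<lambda>q. l + q) ` Poly_Mapping.keys Q)"
        by blast
    qed (auto simp: in_keys_iff)
  qed simp
  also have "\<dots> = Sum_any (\<lambda>l. Poly_Mapping.lookup P l * sum_coeffs Q)"
    by (simp add: Sum_any_right_distrib[symmetric] S_sum finite_subset[OF S_support])
  also have "\<dots> = sum_coeffs P * sum_coeffs Q"
    unfolding sum_coeffs_def by (simp add: Sum_any_left_distrib)
  finally show ?thesis .
qed

lemma of_nat_neq_0_below_CHAR: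
  assumes "0 < n" and "n < CHAR('a::semiring_1)"
  shows "(of_nat n :: 'a) \<noteq> 0"
  using assms by (simp add: of_nat_eq_0_iff_char_dvd nat_dvd_not_less)

lemma of_nat_fact_neq_0:
  assumes "prime CHAR('a::semiring_1)" and "n < CHAR('a)"
  shows "(of_nat (fact n) :: 'a) \<noteq> 0"
  using assms by (simp add: of_nat_eq_0_iff_char_dvd prime_dvd_fact_iff)

lemma of_nat_choose_neq_0:
  assumes "prime CHAR('a::semiring_1)" and "n < CHAR('a)" and "k \<le> n"
  shows "(of_nat (n choose k) :: 'a) \<noteq> 0"
proof
  assume "(of_nat (n choose k) :: 'a) = 0"
  then have "CHAR('a) dvd fact k * fact (n - k) * (n choose k)"
    by (simp add: of_nat_eq_0_iff_char_dvd)
  then have "(of_nat (fact n) :: 'a) = 0"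
    using binomial_fact_lemma[OF assms(3)] by (simp add: of_nat_eq_0_iff_char_dvd)
  with of_nat_fact_neq_0[OF assms(1,2)] show False ..
qed

section \<open>Divisibility of \<open>d\<^sub>2\<close> by \<open>\<beta> - \<alpha>\<close>\<close>

lemma sum_coeffs_var_beta_minus_var_alpha:
  "sum_coeffs (var_beta - var_alpha :: _ \<Rightarrow>\<^sub>0 'a::field) = 0"
  by (simp add: var_beta_def var_alpha_def sum_coeffs_diff)

lemma sum_coeffs_d2ab:
  assumes "p = 6 * m + 5"
  shows "sum_coeffs (d2ab p :: _ \<Rightarrow>\<^sub>0 'a::field) = of_nat ((4 * m + 2) choose m)"
proof -
  have "sum_coeffs (d2ab p :: _ \<Rightarrow>\<^sub>0 'a)
      = (\<Sum>i\<le>m. of_nat (((2 * m + 1) choose i) * ((2 * m + 1) choose (m - i))))"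
    unfolding d2ab_def sum_coeffs_sum assms by simp
  also have "\<dots> = of_nat ((4 * m + 2) choose m)"
    using vandermonde[of "2 * m + 1" "2 * m + 1" m] by (simp flip: of_nat_sum of_nat_mult)
  finally show ?thesis .
qed

lemma d2ab_not_dvd:
  assumes "prime CHAR('a::field)" and "CHAR('a) = 6 * m + 5"
  shows "\<not> (var_beta - var_alpha) dvd (d2ab (6 * m + 5) :: _ \<Rightarrow>\<^sub>0 'a)"
proof
  assume "(var_beta - var_alpha) dvd (d2ab (6 * m + 5) :: _ \<Rightarrow>\<^sub>0 'a)"
  then have "sum_coeffs (d2ab (6 * m + 5) :: _ \<Rightarrow>\<^sub>0 'a) = 0"
    by (auto simp: sum_coeffs_mult sum_coeffs_var_beta_minus_var_alpha)
  moreover have "(of_nat ((4 * m + 2) choose m) :: 'a) \<noteq> 0"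
    using assms by (intro of_nat_choose_neq_0) simp_all
  ultimately show False by (simp add: sum_coeffs_d2ab[OF refl])
qed

section \<open>Polynomial solutions of \<open>(r\<^sup>2 - 4) f'' + a r f' + b f = 0\<close>\<close>

definition solves_ode :: "'a::field \<Rightarrow> 'a \<Rightarrow> 'a poly \<Rightarrow> bool" where
  "solves_ode a b f \<longleftrightarrow>
     [:-4, 0, 1:] * pderiv (pderiv f) + smult a ([:0, 1:] * pderiv f) + smult b f = 0"

lemma solves_ode_pderiv:
  assumes "solves_ode a b f"
  shows "solves_ode (a + 2) (a + b) (pderiv f)"
proof -
  have "pderiv ([:-4, 0, 1:] * pderiv (pderiv f) + smult a ([:0, 1:] * pderiv f) + smult b f) = 0"
    using assms by (simp add: solves_ode_def)
  moreover have "pderiv [:-4, 0, 1:] = smult 2 [:0, 1 :: 'a:]" "pderiv [:0, 1 :: 'a:] = 1"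
    by (simp_all add: pderiv_pCons)
  ultimately show ?thesis
    unfolding solves_ode_def pderiv_add pderiv_mult pderiv_smult
    by (simp add: algebra_simps smult_add_left smult_add_right)
qed

lemma solves_ode_higher_pderiv:
  assumes "solves_ode a b f"
  shows "solves_ode (a + 2 * of_nat k) (b + of_nat k * (a + of_nat k - 1)) ((pderiv ^^ k) f)"
proof (induction k)
  case (Suc k)
  from solves_ode_pderiv[OF Suc.IH] show ?case
    by (simp add: algebra_simps)
qed (simp add: assms)

lemma is_unit_higher_pderiv:
  fixes f :: "'a::field poly"
  assumes "degree f \<le> m" and "of_nat (fact m) * coeff f m \<noteq> 0"
  shows "is_unit ((pderiv ^^ m) f)"
proof -
  have "pochhammer 1 m = (of_nat (fact m) :: 'a)"
    using pochhammer_of_nat[of 1 m] by (simp add: pochhammer_fact)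
  then have "(pderiv ^^ m) f = [:of_nat (fact m) * coeff f m:]"
    using assms(1) by (intro poly_eqI) (auto simp: coeff_higher_pderiv coeff_pCons coeff_eq_0 split: nat.split)
  then show ?thesis using assms(2) by (simp add: is_unit_const_poly_iff dvd_field_iff)
qed

lemma poly_is_unit_neq_0: "is_unit (g :: 'a::field poly) \<Longrightarrow> poly g x \<noteq> 0"
  by (auto simp: is_unit_poly_iff)

lemma solves_ode_poly_neq_0:
  assumes ode: "solves_ode a b f" and unit: "is_unit ((pderiv ^^ m) f)"
    and r: "r * r = 4" "r \<noteq> 0" and nz: "\<And>k. k < m \<Longrightarrow> a + 2 * of_nat k \<noteq> 0"
  shows "poly f r \<noteq> 0"
proof
  assume "poly f r = 0"
  have "poly ((pderiv ^^ k) f) r = 0" if "k \<le> m" for k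
    using that
  proof (induction k)
    case (Suc k)
    define g where "g = (pderiv ^^ k) f"
    obtain b' where "solves_ode (a + 2 * of_nat k) b' g"
      using solves_ode_higher_pderiv[OF ode] unfolding g_def by blast
    then have "poly ([:-4, 0, 1:] * pderiv (pderiv g) + smult (a + 2 * of_nat k) ([:0, 1:] * pderiv g)
        + smult b' g) r = 0"
      unfolding solves_ode_def by (simp only: poly_0)
    then have "(r * r - 4) * poly (pderiv (pderiv g)) r
        + (a + 2 * of_nat k) * r * poly (pderiv g) r + b' * poly g r = 0"
      by (simp add: algebra_simps)
    with Suc nz[of k] r show ?case by (simp add: g_def)
  qed (simp add: \<open>poly f r = 0\<close>)
  with unit show False by (metis order_refl poly_is_unit_neq_0)
qed

lemma dvd_linear_mult_cancel:
  fixes g h :: "'a::field poly"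
  assumes "poly g x \<noteq> 0" and "g dvd [:-x, 1:] * h"
  shows "g dvd h"
proof -
  obtain q where q: "[:-x, 1:] * h = g * q" using assms(2) by blast
  have "poly g x * poly q x = 0" using arg_cong[OF q, of "\<lambda>r. poly r x"] by simp
  then have "poly q x = 0" using assms(1) by simp
  then obtain q' where "q = [:-x, 1:] * q'" by (auto simp: poly_eq_0_iff_dvd)
  with q have "[:-x, 1:] * h = [:-x, 1:] * (g * q')" by (simp only: ac_simps)
  then have "h = g * q'" using mult_left_cancel[of "[:-x, 1:]"] by simp
  then show ?thesis by simp
qed

lemma solves_ode_coprime_pderiv:
  assumes ode: "solves_ode a b f" and unit: "is_unit ((pderiv ^^ m) f)"
    and "poly f 2 \<noteq> 0" "poly f (-2) \<noteq> 0"
  shows "coprime f (pderiv f)"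
proof (rule coprimeI)
  fix g assume "g dvd f" "g dvd pderiv f"
  have "poly g 2 \<noteq> 0" "poly g (-2) \<noteq> 0"
    using \<open>g dvd f\<close> assms(3,4) by auto
  then have cancel: "g dvd h" if "g dvd [:-4, 0, 1:] * h" for h
  proof -
    have "[:-4, 0, 1:] * h = [:-2, 1:] * ([:-(-2), 1:] * h)" by (simp add: algebra_simps)
    with that \<open>poly g 2 \<noteq> 0\<close> \<open>poly g (-2) \<noteq> 0\<close> show ?thesis
      by (metis dvd_linear_mult_cancel)
  qed
  have "g dvd (pderiv ^^ k) f \<and> g dvd (pderiv ^^ Suc k) f" for k
  proof (induction k)
    case (Suc k)
    define h where "h = (pderiv ^^ k) f"
    obtain a' b' where "solves_ode a' b' h"
      using solves_ode_higher_pderiv[OF ode] unfolding h_def by blast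
    then have "[:-4, 0, 1:] * pderiv (pderiv h) = - (smult a' ([:0, 1:] * pderiv h) + smult b' h)"
      unfolding solves_ode_def eq_neg_iff_add_eq_0 by (simp only: add.assoc)
    moreover have "g dvd - (smult a' ([:0, 1:] * pderiv h) + smult b' h)"
      using Suc.IH unfolding dvd_minus_iff h_def by (intro dvd_add dvd_smult dvd_mult) simp_all
    ultimately have "g dvd pderiv (pderiv h)" by (metis cancel)
    with Suc.IH show ?case by (simp add: h_def)
  qed (simp add: \<open>g dvd f\<close> \<open>g dvd pderiv f\<close>)
  with unit show "is_unit g" by (meson dvd_unit_imp_unit)
qed

lemma solves_ode_iff_coeff:
  "solves_ode a b f \<longleftrightarrow>
    (\<forall>k. of_nat (4 * (k + 1) * (k + 2)) * coeff f (k + 2)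
           = (of_nat (k * (k - 1)) + a * of_nat k + b) * coeff f k)"
proof -
  have coeff_lhs: "coeff ([:-4, 0, 1:] * pderiv (pderiv f) + smult a ([:0, 1:] * pderiv f) + smult b f) k
      = (of_nat (k * (k - 1)) + a * of_nat k + b) * coeff f k
        - of_nat (4 * (k + 1) * (k + 2)) * coeff f (k + 2)" for k
    by (cases k; cases "k - 1") (simp_all add: coeff_pderiv algebra_simps numeral_eq_Suc)
  show ?thesis
    unfolding solves_ode_def poly_eq_iff coeff_lhs coeff_0 right_minus_eq by (metis (no_types))
qed

section \<open>The coefficients of \<open>c\<^sub>2\<close>\<close>

lemma mon3_add: "mon3 a b c + mon3 a' b' c' = mon3 (a + a') (b + b') (c + c')"
  unfolding mon3_def by (simp add: single_add algebra_simps)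

lemma mon3_eq_iff: "mon3 a b c = mon3 a' b' c' \<longleftrightarrow> a = a' \<and> b = b' \<and> c = c'"
proof -
  have "Poly_Mapping.lookup (mon3 a b c) 0 = a" "Poly_Mapping.lookup (mon3 a b c) 1 = b"
    "Poly_Mapping.lookup (mon3 a b c) 2 = c" for a b c
    unfolding mon3_def by (simp_all add: lookup_add lookup_single)
  then show ?thesis by metis
qed

lemma single_mon3_power:
  "Poly_Mapping.single (mon3 a b c) (v :: 'b::comm_semiring_1) ^ n
     = Poly_Mapping.single (mon3 (n * a) (n * b) (n * c)) (v ^ n)"
proof (induction n)
  case 0
  then show ?case by (simp add: mon3_def)
next
  case (Suc n)
  then show ?case by (simp add: mult_single mon3_add algebra_simps)
qed

lemma of_nat_mult_single:
  "(of_nat k :: 'c::comm_monoid_add \<Rightarrow>\<^sub>0 'b::comm_semiring_1) * Poly_Mapping.single K v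
     = Poly_Mapping.single K (of_nat k * v)"
  by (metis single_of_nat mult_single add_0)

lemma of_nat_mult_monom: "of_nat c * monom a n = monom (of_nat c * a) n"
  by (simp add: of_nat_monom mult_monom)

text \<open>Multinomial expansion of \<open>F\<^sup>N\<close>, choosing \<open>N - i\<close> factors \<open>z\<^sup>4\<close>, \<open>i - j\<close> factors
  \<open>r y\<^sup>2 z\<^sup>2\<close>, \<open>j - l\<close> factors \<open>y\<^sup>4\<close> and \<open>l\<close> factors \<open>x\<^sup>3 z\<close>.\<close>
lemma quarticF_power:
  "(quarticF :: _ \<Rightarrow>\<^sub>0 'a::field poly) ^ N =
    (\<Sum>i\<le>N. \<Sum>j\<le>i. \<Sum>l\<le>j.
      Poly_Mapping.single (mon3 (3 * l) (4 * (j - l) + 2 * (i - j)) (l + 2 * (i - j) + 4 * (N - i)))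
        (monom (of_nat ((N choose i) * (i choose j) * (j choose l))) (i - j)))"
proof -
  let ?x3z = "Poly_Mapping.single (mon3 3 0 1) (1 :: 'a poly)"
  let ?y4 = "Poly_Mapping.single (mon3 0 4 0) (1 :: 'a poly)"
  let ?ry2z2 = "Poly_Mapping.single (mon3 0 2 2) (monom (1 :: 'a) 1)"
  let ?z4 = "Poly_Mapping.single (mon3 0 0 4) (1 :: 'a poly)"
  have F: "quarticF = ?x3z + ?y4 + ?ry2z2 + ?z4"
    unfolding quarticF_def by (simp add: monom_altdef)
  have x3z_y4_power: "(?x3z + ?y4) ^ j =
    (\<Sum>l\<le>j. Poly_Mapping.single (mon3 (3 * l) (4 * (j - l)) l) (of_nat (j choose l)))" for j
    unfolding binomial_ring
    by (rule sum.cong) (simp_all add: single_mon3_power of_nat_mult_single mult_single mon3_add algebra_simps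
        of_nat_mult_monom)
  have x3z_y4_ry2z2_power: "(?x3z + ?y4 + ?ry2z2) ^ i =
    (\<Sum>j\<le>i. \<Sum>l\<le>j. Poly_Mapping.single (mon3 (3 * l) (4 * (j - l) + 2 * (i - j)) (l + 2 * (i - j)))
      (monom (of_nat ((i choose j) * (j choose l))) (i - j)))" for i
    unfolding binomial_ring[of "?x3z + ?y4"] x3z_y4_power
    by (rule sum.cong) (simp_all add: sum_distrib_left sum_distrib_right single_mon3_power
        of_nat_mult_single mult_single mon3_add algebra_simps monom_power mult_monom of_nat_mult_monom)
  show ?thesis
    unfolding F binomial_ring[of "?x3z + ?y4 + ?ry2z2"] x3z_y4_ry2z2_power
    by (rule sum.cong) (simp_all add: sum_distrib_left sum_distrib_right single_mon3_power
        of_nat_mult_single mult_single mon3_add algebra_simps monom_power mult_monom of_nat_mult_monom)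
qed

lemma c2_exponents_iff:
  fixes m i j l k :: nat
  assumes "l \<le> j" "j \<le> i" "i \<le> 6 * m + 4"
  shows "(3 * l = 12 * m + 9 \<and> 4 * (j - l) + 2 * (i - j) = 6 * m + 4
            \<and> l + 2 * (i - j) + 4 * (6 * m + 4 - i) = 6 * m + 3 \<and> i - j = k)
     \<longleftrightarrow> (k \<le> m \<and> even (m - k) \<and> i = 6 * m + 4 - (m - k) div 2
            \<and> j = 5 * m + 4 + (m - k) div 2 \<and> l = 4 * m + 3)"
proof -
  obtain a b c where abc: "j = l + a" "i = l + a + b" "6 * m + 4 = l + a + b + c"
    using assms by (metis le_Suc_ex add.assoc)
  then have "j - l = a" "i - j = b" "6 * m + 4 - i = c" by simp_all
  then show ?thesis
    using abc by auto presburger+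
qed

lemma sum_if_independent: "(\<Sum>x\<in>A. if P then f x else 0) = (if P then \<Sum>x\<in>A. f x else 0)"
  by simp

definition c2_term :: "nat \<Rightarrow> nat \<Rightarrow> nat" where
  "c2_term m t = ((6 * m + 4) choose (6 * m + 4 - t)) * ((6 * m + 4 - t) choose (5 * m + 4 + t))
     * ((5 * m + 4 + t) choose (4 * m + 3))"

definition c2_coeff :: "nat \<Rightarrow> nat \<Rightarrow> nat" where
  "c2_coeff m k = (if k \<le> m \<and> even (m - k) then c2_term m ((m - k) div 2) else 0)"

lemma coeff_c2:
  assumes "p = 6 * m + 5"
  shows "coeff (c2 p :: 'a::field poly) k = of_nat (c2_coeff m k)"
proof -
  define N where "N = 6 * m + 4"
  define t where "t = (m - k) div 2"
  define g where "g = (k \<le> m \<and> even (m - k))"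
  have c2_eq: "c2 p = Poly_Mapping.lookup ((quarticF :: _ \<Rightarrow>\<^sub>0 'a poly) ^ N)
      (mon3 (12 * m + 9) (6 * m + 4) (6 * m + 3))"
    unfolding c2_def assms N_def by (simp add: algebra_simps)
  have "coeff (c2 p :: 'a poly) k = (\<Sum>i\<le>N. \<Sum>j\<le>i. \<Sum>l\<le>j.
     if 3 * l = 12 * m + 9 \<and> 4 * (j - l) + 2 * (i - j) = 6 * m + 4
        \<and> l + 2 * (i - j) + 4 * (N - i) = 6 * m + 3 \<and> i - j = k
     then of_nat ((N choose i) * (i choose j) * (j choose l)) else 0)"
    unfolding c2_eq quarticF_power lookup_sum lookup_single Polynomial.coeff_sum
    by (intro sum.cong) (auto simp: mon3_eq_iff when_def simp del: of_nat_mult)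
  also have "\<dots> = (\<Sum>i\<le>N. \<Sum>j\<le>i. \<Sum>l\<le>j.
     if g then if i = N - t then if j = 5 * m + 4 + t then if l = 4 * m + 3
     then of_nat ((N choose i) * (i choose j) * (j choose l)) else 0 else 0 else 0 else 0)"
    using c2_exponents_iff[of _ _ _ m k] unfolding N_def t_def g_def
    by (intro sum.cong refl) (simp only: atMost_iff, simp only: if_split_eq1 if_split_eq2, blast)
  also have "\<dots> = of_nat (c2_coeff m k)"
  proof (cases g)
    case True
    then have "5 * m + 4 + t \<le> 6 * m + 4 - t" unfolding t_def g_def by auto
    with True show ?thesis
      unfolding c2_coeff_def c2_term_def N_def g_def[symmetric] t_def[symmetric]
      by (simp add: sum_if_independent)
  next
    case False
    then show ?thesis unfolding c2_coeff_def g_def[symmetric] by simp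
  qed
  finally show ?thesis .
qed

lemma c2_term_mult_facts:
  assumes "2 * t \<le> m"
  shows "c2_term m t * (fact t * fact (m - 2 * t) * fact (m + 1 + t) * fact (4 * m + 3)) = fact (6 * m + 4)"
proof -
  have 1: "((6 * m + 4) choose (6 * m + 4 - t)) * fact t * fact (6 * m + 4 - t) = fact (6 * m + 4)"
    using binomial_fact_lemma[of "6 * m + 4 - t" "6 * m + 4"] assms by (simp add: ac_simps)
  have 2: "((6 * m + 4 - t) choose (5 * m + 4 + t)) * fact (m - 2 * t) * fact (5 * m + 4 + t)
      = fact (6 * m + 4 - t)"
    using binomial_fact_lemma[of "5 * m + 4 + t" "6 * m + 4 - t"] assms
    by (simp add: numeral_eq_Suc ac_simps)
  have 3: "((5 * m + 4 + t) choose (4 * m + 3)) * fact (m + 1 + t) * fact (4 * m + 3) = fact (5 * m + 4 + t)"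
    using binomial_fact_lemma[of "4 * m + 3" "5 * m + 4 + t"] by (simp add: ac_simps)
  show ?thesis
    unfolding c2_term_def 1[symmetric] 2[symmetric] 3[symmetric] by (simp only: ac_simps)
qed

lemma c2_term_Suc:
  assumes "m = k + 2 * (t + 1)"
  shows "(k + 1) * (k + 2) * c2_term m t = (t + 1) * (m + 2 + t) * c2_term m (t + 1)"
proof -
  define Q where "Q = fact t * fact k * fact (m + 1 + t) * (fact (4 * m + 3) :: nat)"
  have k2: "m - 2 * t = k + 2" "m - 2 * (t + 1) = k" "m + 1 + (t + 1) = Suc (m + 1 + t)"
    using assms by simp_all
  have fact_k2: "fact (k + 2) = (k + 1) * (k + 2) * (fact k :: nat)"
    by (simp add: numeral_2_eq_2 algebra_simps)
  have fact_Suc': "fact (t + 1) = (t + 1) * (fact t :: nat)"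
    "fact (Suc (m + 1 + t)) = (m + 2 + t) * (fact (m + 1 + t) :: nat)"
    by simp_all
  have "(k + 1) * (k + 2) * c2_term m t * Q
      = c2_term m t * (fact t * fact (m - 2 * t) * fact (m + 1 + t) * fact (4 * m + 3))"
    unfolding k2 fact_k2 Q_def by (simp only: ac_simps)
  also have "\<dots> = fact (6 * m + 4)"
    using assms by (intro c2_term_mult_facts) simp
  also have "\<dots> = c2_term m (t + 1)
      * (fact (t + 1) * fact (m - 2 * (t + 1)) * fact (m + 1 + (t + 1)) * fact (4 * m + 3))"
    using assms by (intro c2_term_mult_facts[symmetric]) simp
  also have "\<dots> = (t + 1) * (m + 2 + t) * c2_term m (t + 1) * Q"
    unfolding k2 Q_def fact_Suc' by (simp only: ac_simps)
  finally show ?thesis by (simp add: Q_def)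
qed

lemma c2_coeff_recurrence:
  "4 * (k + 1) * (k + 2) * c2_coeff m (k + 2) + (4 * m + 1) * k * c2_coeff m k
     = (k * (k - 1) + m * (3 * m + 2)) * c2_coeff m k"
proof (cases "k \<le> m \<and> even (m - k)")
  case True
  then obtain t where m: "m = k + 2 * t" by (metis dvd_def le_add_diff_inverse)
  have identity: "k * (k - 1) + m * (3 * m + 2) = (4 * m + 1) * k + 4 * t * (m + 1 + t)"
    unfolding m by (cases k) (simp_all add: algebra_simps)
  have "(k + 1) * (k + 2) * c2_coeff m (k + 2) = t * (m + 1 + t) * c2_coeff m k"
  proof (cases t)
    case 0
    then show ?thesis using m by (simp add: c2_coeff_def)
  next
    case (Suc s)
    then have "m = k + 2 * (s + 1)" using m by simp
    from c2_term_Suc[OF this] show ?thesis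
      using m Suc by (simp add: c2_coeff_def ac_simps)
  qed
  then show ?thesis unfolding identity by (simp add: algebra_simps)
next
  case False
  then have "\<not> (k + 2 \<le> m \<and> even (m - (k + 2)))" by auto
  then have "c2_coeff m (k + 2) = 0" unfolding c2_coeff_def by (rule if_not_P)
  moreover have "c2_coeff m k = 0" using False unfolding c2_coeff_def by (rule if_not_P)
  ultimately show ?thesis by simp
qed

lemma c2_solves_ode:
  assumes "p = 6 * m + 5"
  shows "solves_ode (- of_nat (4 * m + 1)) (of_nat (m * (3 * m + 2))) (c2 p :: 'a::field poly)"
  unfolding solves_ode_iff_coeff coeff_c2[OF assms]
proof
  fix k
  have "(of_nat (4 * (k + 1) * (k + 2) * c2_coeff m (k + 2) + (4 * m + 1) * k * c2_coeff m k) :: 'a)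
      = of_nat ((k * (k - 1) + m * (3 * m + 2)) * c2_coeff m k)"
    by (simp only: c2_coeff_recurrence)
  then show "of_nat (4 * (k + 1) * (k + 2)) * of_nat (c2_coeff m (k + 2))
      = (of_nat (k * (k - 1)) + - of_nat (4 * m + 1) * of_nat k + of_nat (m * (3 * m + 2)))
        * (of_nat (c2_coeff m k) :: 'a)"
    unfolding of_nat_add of_nat_mult by (simp add: algebra_simps)
qed

lemma is_unit_higher_pderiv_c2:
  assumes "prime CHAR('a::field)" and "CHAR('a) = 6 * m + 5"
  shows "is_unit ((pderiv ^^ m) (c2 (6 * m + 5) :: 'a poly))"
proof (rule is_unit_higher_pderiv)
  show "degree (c2 (6 * m + 5) :: 'a poly) \<le> m"
    by (rule degree_le) (simp add: coeff_c2 c2_coeff_def)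
  show "of_nat (fact m) * coeff (c2 (6 * m + 5) :: 'a poly) m \<noteq> 0"
    using of_nat_fact_neq_0[OF assms(1)] of_nat_choose_neq_0[OF assms(1)] assms(2)
    by (simp add: coeff_c2 c2_coeff_def c2_term_def)
qed

theorem lemma3p3:
  fixes p :: nat
  assumes "prime p" and "p \<ge> 5" and "p mod 6 = 5"
    and "CHAR('a::field) = p"
  shows "\<not> ((var_beta - var_alpha) dvd (d2ab p :: (nat \<Rightarrow>\<^sub>0 nat) \<Rightarrow>\<^sub>0 'a))
         \<and> poly (c2 p :: 'a poly) 2 \<noteq> 0 \<and> poly (c2 p :: 'a poly) (-2) \<noteq> 0
         \<and> separable (c2 p :: 'a poly)"
proof -
  obtain m where p: "p = 6 * m + 5"
    using div_mult_mod_eq[of p 6] assms(3) by (metis add.commute mult.commute)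
  have char: "prime CHAR('a)" "CHAR('a) = 6 * m + 5" using assms(1,4) p by simp_all
  note ode = c2_solves_ode[OF p, where 'a = 'a]
  note unit = is_unit_higher_pderiv_c2[OF char, folded p]
  have "- of_nat (4 * m + 1) + 2 * of_nat k \<noteq> (0 :: 'a)" if "k < m" for k
  proof -
    have "(of_nat (4 * m + 1 - 2 * k) :: 'a) \<noteq> 0"
      using that char(2) by (intro of_nat_neq_0_below_CHAR) simp_all
    moreover have "- of_nat (4 * m + 1) + 2 * of_nat k = - (of_nat (4 * m + 1 - 2 * k) :: 'a)"
      using that by (simp add: of_nat_diff)
    ultimately show ?thesis by simp
  qed
  moreover have "(2 :: 'a) \<noteq> 0" "(2 :: 'a) * 2 = 4"
    using of_nat_neq_0_below_CHAR[of 2, where 'a = 'a] char(2) by simp_all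
  ultimately have "poly (c2 p :: 'a poly) 2 \<noteq> 0" "poly (c2 p :: 'a poly) (-2) \<noteq> 0"
    using solves_ode_poly_neq_0[OF ode unit] by auto
  with solves_ode_coprime_pderiv[OF ode unit] show ?thesis
    unfolding separable_def using d2ab_not_dvd[OF char] p by simp
qed

end
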